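(* Let $(M_0,d,\Gamma)$ be a cone-like space and $\psi:M_0\to\mathbb{R}_+^*$ a function with $\psi\circ f=\rho(f)\psi$ for every $f\in\Gamma$, such that $\psi$ and $\psi^{-1}$ are locally bounded. Then $\psi$ is quasi-linear.
   Context: A cone-like space is a locally compact metric space $(M_0,d)$ together with a finitely generated, non-trivial group $\Gamma$ acting freely and properly discontinuously on $M_0$ by homotheties (i.e. for each $f\in\Gamma$ there is $\rho(f)>0$ with $d(f(x),f(y))=\rho(f)d(x,y)$ for all $x,y$), such that the identity is the only element of $\Gamma$ acting as an isometry, and such that the quotient $M_0/\Gamma$ is compact. The metric completion of a cone-like space is $M_0\cup\{\omega\}$ for a single point $\omega$ (the singularity); $\delta(x):=d(x,\omega)$. A positive function $\psi$ on $M_0$ is quasi-linear if there are constants $0<k_1\le k_2$ with $k_1\delta\le\psi\le k_2\delta$ on $M_0$. *)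

theory Defs
  imports "HOL-Analysis.Analysis" "HOL-Algebra.Bij" "HOL-Algebra.Generated_Groups"
begin

text \<open>The cone-like space M0 is the whole carrier of a metric space type 'a;
  the group Gamma is a group of bijections of 'a under composition.\<close>

definition is_homothety :: "('a::metric_space \<Rightarrow> 'a) \<Rightarrow> real \<Rightarrow> bool" where
  "is_homothety f r \<longleftrightarrow> r > 0 \<and> (\<forall>x y. dist (f x) (f y) = r * dist x y)"

definition hratio :: "('a::metric_space \<Rightarrow> 'a) \<Rightarrow> real" where
  "hratio f = (SOME r. is_homothety f r)"

definition orbit :: "('a \<Rightarrow> 'a) set \<Rightarrow> 'a \<Rightarrow> 'a set" where
  "orbit G x = {f x | f. f \<in> G}"

definition cone_like :: "('a::metric_space \<Rightarrow> 'a) set \<Rightarrow> bool" where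
  "cone_like G \<longleftrightarrow>
     locally_compact_space (euclidean :: 'a topology) \<and>
     subgroup G (BijGroup (UNIV :: 'a set)) \<and>
     (\<exists>S. finite S \<and> S \<subseteq> G \<and> G = generate (BijGroup (UNIV :: 'a set)) S) \<and>
     G \<noteq> {id} \<and>
     (\<forall>f\<in>G. \<exists>r. is_homothety f r) \<and>
     (\<forall>f\<in>G. \<forall>x. f x = x \<longrightarrow> f = id) \<and>
     (\<forall>K. compact K \<longrightarrow> finite {f \<in> G. f ` K \<inter> K \<noteq> {}}) \<and>
     (\<forall>f\<in>G. (\<forall>x y. dist (f x) (f y) = dist x y) \<longrightarrow> f = id) \<and>
     (\<exists>Q. quotient_map (euclidean :: 'a topology) Q (orbit G) \<and> compact_space Q)"

text \<open>Distance to the singularity omega: the completion is M0 plus one point omega,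
  and every non-convergent Cauchy sequence of M0 converges to omega in the completion,
  so d(x, omega) is the limit of dist x (s n) for any such sequence s.\<close>

definition sing_dist :: "'a::metric_space \<Rightarrow> real" where
  "sing_dist x = (THE r. \<exists>s. Cauchy s \<and> \<not> convergent s \<and> (\<lambda>n. dist x (s n)) \<longlonglongrightarrow> r)"

definition quasi_linear :: "('a::metric_space \<Rightarrow> real) \<Rightarrow> bool" where
  "quasi_linear \<psi> \<longleftrightarrow> (\<forall>x. \<psi> x > 0) \<and>
     (\<exists>k1 k2. 0 < k1 \<and> k1 \<le> k2 \<and> (\<forall>x. k1 * sing_dist x \<le> \<psi> x \<and> \<psi> x \<le> k2 * sing_dist x))"

definition locally_bounded :: "('a::metric_space \<Rightarrow> real) \<Rightarrow> bool" where
  "locally_bounded g \<longleftrightarrow> (\<forall>x. \<exists>U. open U \<and> x \<in> U \<and> bounded (g ` U))"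

end

theory Submission imports Defs begin

(* If two positive functions both transform by the factor hratio f under every f in G,
   their quotient is G-invariant.  Hence, if a compact set K meets every orbit and both
   functions are bounded above and away from zero on K, they are comparable everywhere.
   For psi the bounds on K come from local boundedness of psi and 1/psi.  For the distance
   to the singularity we construct it explicitly: for a contraction g in G and a point p,
   the sequence g^m p is a non-convergent Cauchy sequence, and
   delta y = lim dist y (g^m p) is 1-Lipschitz, positive and equivariant.  Using a compact
   set K that contains a ball of fixed radius around a point of every orbit, delta is shown
   to vanish along every non-convergent Cauchy sequence, so delta = sing_dist. *)


lemma homothety_lipschitz:
  assumes "is_homothety f c"
  shows "c-lipschitz_on S f"
  using assms by (auto simp: lipschitz_on_def is_homothety_def)

lemma homothety_tendsto:
  assumes "is_homothety f c" "X \<longlonglongrightarrow> l"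
  shows "(\<lambda>n. f (X n)) \<longlonglongrightarrow> f l"
proof -
  have "continuous_on UNIV f"
    using lipschitz_on_continuous_on[OF homothety_lipschitz[OF assms(1)]] .
  then have "isCont f l" by (simp add: continuous_on_eq_continuous_at)
  then show ?thesis using assms(2) by (rule isCont_tendsto_compose)
qed

lemma homothety_funpow:
  assumes "is_homothety g c"
  shows "is_homothety (g ^^ m) (c ^ m)"
  using assms by (induction m) (auto simp: is_homothety_def)

lemma lipschitz_Cauchy:
  assumes "L-lipschitz_on UNIV f" "Cauchy X"
  shows "Cauchy (\<lambda>n. f (X n))"
  using uniformly_continuous_on_Cauchy[OF lipschitz_on_uniformly_continuous[OF assms(1)] assms(2)]
  by simp

lemma Cauchy_tail_in_compact_convergent:
  fixes X :: "nat \<Rightarrow> 'a::metric_space"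
  assumes "Cauchy X" "compact K" "\<And>n. n \<ge> N \<Longrightarrow> X n \<in> K"
  shows "convergent X"
proof -
  have "Cauchy (\<lambda>n. X (n + N))"
    using Cauchy_subseq_Cauchy[OF assms(1), of "\<lambda>n. n + N"] by (simp add: strict_mono_def comp_def)
  moreover have "\<forall>n. X (n + N) \<in> K" using assms(3) by simp
  ultimately obtain l where "(\<lambda>n. X (n + N)) \<longlonglongrightarrow> l"
    using compact_imp_complete[OF assms(2)] unfolding complete_def by (metis (no_types, lifting))
  then show ?thesis using LIMSEQ_offset convergent_def by blast
qed

lemma locally_bounded_compact:
  assumes "locally_bounded h" "compact K"
  shows "\<exists>B. \<forall>x\<in>K. \<bar>h x\<bar> \<le> B"
proof -
  have "\<forall>x. \<exists>U. open U \<and> x \<in> U \<and> bounded (h ` U)"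
    using assms(1) by (simp add: locally_bounded_def)
  then obtain U where U: "\<And>x. open (U x) \<and> x \<in> U x \<and> bounded (h ` U x)" by metis
  have "K \<subseteq> \<Union> (U ` K)" using U by auto
  then obtain C where C: "C \<subseteq> K" "finite C" "K \<subseteq> \<Union> (U ` C)"
    using compactE_image[OF assms(2), of K U] U by metis
  have "bounded (\<Union>x\<in>C. h ` U x)" using C U by (intro bounded_UN) auto
  then obtain B where B: "\<forall>z\<in>(\<Union>x\<in>C. h ` U x). norm z \<le> B" using bounded_iff by metis
  have "\<bar>h x\<bar> \<le> B" if xK: "x \<in> K" for x
  proof -
    obtain c where "c \<in> C" "x \<in> U c" using C(3) xK by blast
    then show ?thesis using B by fastforce
  qed
  then show ?thesis by blast
qed

lemma locally_bounded_positive_bounds: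
  fixes h :: "'a::metric_space \<Rightarrow> real"
  assumes pos: "\<And>x. h x > 0" and "locally_bounded h" "locally_bounded (\<lambda>x. inverse (h x))"
    and "compact K"
  shows "\<exists>b>0. \<exists>B. \<forall>x\<in>K. b \<le> h x \<and> h x \<le> B"
proof -
  obtain B where B: "\<forall>x\<in>K. \<bar>h x\<bar> \<le> B"
    using locally_bounded_compact assms(2,4) by blast
  obtain C where C: "\<forall>x\<in>K. \<bar>inverse (h x)\<bar> \<le> C"
    using locally_bounded_compact assms(3,4) by blast
  define M where "M = max 1 C"
  have M_pos: "M > 0" by (simp add: M_def)
  have "inverse M \<le> h x" if "x \<in> K" for x
  proof -
    have "\<bar>inverse (h x)\<bar> \<le> C" using C that by blast
    then have "inverse (h x) \<le> C" using pos[of x] by simp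
    then have "inverse (h x) \<le> M" by (simp add: M_def)
    then have "inverse M \<le> inverse (inverse (h x))"
      using pos[of x] by (intro le_imp_inverse_le) simp_all
    then show ?thesis by simp
  qed
  moreover have "h x \<le> B" if "x \<in> K" for x
    using B that abs_ge_self order_trans by blast
  ultimately show ?thesis using M_pos positive_imp_inverse_positive by blast
qed

lemma continuous_positive_bounds:
  fixes h :: "'a::metric_space \<Rightarrow> real"
  assumes "continuous_on K h" "compact K" "\<And>x. x \<in> K \<Longrightarrow> h x > 0"
  shows "\<exists>b>0. \<exists>B. \<forall>x\<in>K. b \<le> h x \<and> h x \<le> B"
proof (cases "K = {}")
  case True
  then show ?thesis by (intro exI[of _ 1]) simp
next
  case False
  obtain x0 where "x0 \<in> K" "\<forall>y\<in>K. h x0 \<le> h y"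
    using continuous_attains_inf[OF assms(2) False assms(1)] by blast
  moreover obtain x1 where "\<forall>y\<in>K. h y \<le> h x1"
    using continuous_attains_sup[OF assms(2) False assms(1)] by blast
  ultimately show ?thesis using assms(3) by blast
qed

(* Comparison of equivariant functions: psi / phi is invariant under G, so bounds on a set K
   meeting every orbit make phi and psi comparable on the whole space. *)
lemma equivariant_comparison:
  fixes \<phi> \<psi> :: "'a \<Rightarrow> real" and \<rho> :: "('a \<Rightarrow> 'a) \<Rightarrow> real"
  assumes meets: "\<And>x. \<exists>f\<in>G. f x \<in> K"
    and \<rho>_pos: "\<And>f. f \<in> G \<Longrightarrow> \<rho> f > 0"
    and \<phi>_equiv: "\<And>f x. f \<in> G \<Longrightarrow> \<phi> (f x) = \<rho> f * \<phi> x"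
    and \<psi>_equiv: "\<And>f x. f \<in> G \<Longrightarrow> \<psi> (f x) = \<rho> f * \<psi> x"
    and \<phi>_K: "\<And>x. x \<in> K \<Longrightarrow> a \<le> \<phi> x \<and> \<phi> x \<le> A" and a_pos: "a > 0"
    and \<psi>_K: "\<And>x. x \<in> K \<Longrightarrow> b \<le> \<psi> x \<and> \<psi> x \<le> B" and b_pos: "b > 0"
  shows "\<exists>k1 k2. 0 < k1 \<and> k1 \<le> k2 \<and> (\<forall>x. k1 * \<phi> x \<le> \<psi> x \<and> \<psi> x \<le> k2 * \<phi> x)"
proof -
  obtain f0 y where "f0 \<in> G" "f0 y \<in> K" using meets by blast
  then have "a \<le> A" "b \<le> B" using \<phi>_K \<psi>_K order_trans by blast+
  then have A_pos: "A > 0" and B_pos: "B > 0" and ratios: "b / A \<le> B / a"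
    using a_pos b_pos frac_le[of B b a A] by linarith+
  have "b / A * \<phi> x \<le> \<psi> x \<and> \<psi> x \<le> B / a * \<phi> x" for x
  proof -
    obtain f where f: "f \<in> G" "f x \<in> K" using meets by blast
    have "\<rho> f * (b / A * \<phi> x) = b / A * \<phi> (f x)" using \<phi>_equiv[OF f(1)] by simp
    also have "\<dots> \<le> b / A * A" using \<phi>_K[OF f(2)] A_pos b_pos by (intro mult_left_mono) auto
    also have "\<dots> = b" using A_pos by simp
    also have "\<dots> \<le> \<psi> (f x)" using \<psi>_K[OF f(2)] by blast
    also have "\<dots> = \<rho> f * \<psi> x" using \<psi>_equiv[OF f(1)] .
    finally have lower: "b / A * \<phi> x \<le> \<psi> x"
      using \<rho>_pos[OF f(1)] by (rule mult_left_le_imp_le)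
    have "\<rho> f * \<psi> x = \<psi> (f x)" using \<psi>_equiv[OF f(1)] by simp
    also have "\<dots> \<le> B" using \<psi>_K[OF f(2)] by blast
    also have "\<dots> = B / a * a" using a_pos by simp
    also have "\<dots> \<le> B / a * \<phi> (f x)" using \<phi>_K[OF f(2)] a_pos B_pos by (intro mult_left_mono) auto
    also have "\<dots> = \<rho> f * (B / a * \<phi> x)" using \<phi>_equiv[OF f(1)] by simp
    finally have upper: "\<psi> x \<le> B / a * \<phi> x"
      using \<rho>_pos[OF f(1)] by (rule mult_left_le_imp_le)
    show ?thesis using lower upper by blast
  qed
  then show ?thesis using ratios A_pos b_pos by (intro exI[of _ "b / A"] exI[of _ "B / a"]) simp
qed

lemma BijGroup_subgroup_closed:
  assumes sg: "subgroup G (BijGroup (UNIV::'a set))"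
  shows "id \<in> G"
    and "\<And>f h. f \<in> G \<Longrightarrow> h \<in> G \<Longrightarrow> f \<circ> h \<in> G"
    and "\<And>f. f \<in> G \<Longrightarrow> \<exists>h\<in>G. (\<forall>x. h (f x) = x) \<and> (\<forall>x. f (h x) = x)"
proof -
  interpret grp: group "BijGroup (UNIV::'a set)" by (rule group_BijGroup)
  have one: "\<one>\<^bsub>BijGroup (UNIV::'a set)\<^esub> = id" by (auto simp: BijGroup_def fun_eq_iff)
  have car: "carrier (BijGroup (UNIV::'a set)) = Bij UNIV" by (simp add: BijGroup_def)
  have mult: "\<And>f h. f \<in> Bij UNIV \<Longrightarrow> h \<in> Bij UNIV \<Longrightarrow> f \<otimes>\<^bsub>BijGroup (UNIV::'a set)\<^esub> h = f \<circ> h"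
    by (auto simp: BijGroup_def compose_def fun_eq_iff)
  have sub: "G \<subseteq> Bij UNIV" using subgroup.subset[OF sg] car by simp
  show "id \<in> G" using subgroup.one_closed[OF sg] one by simp
  show "\<And>f h. f \<in> G \<Longrightarrow> h \<in> G \<Longrightarrow> f \<circ> h \<in> G"
    using subgroup.m_closed[OF sg] sub mult by (metis subsetD)
  show "\<exists>h\<in>G. (\<forall>x. h (f x) = x) \<and> (\<forall>x. f (h x) = x)" if f: "f \<in> G" for f
  proof -
    have fc: "f \<in> carrier (BijGroup UNIV)" using sub f car by auto
    let ?h = "inv\<^bsub>BijGroup (UNIV::'a set)\<^esub> f"
    have hG: "?h \<in> G" using subgroup.m_inv_closed[OF sg f] .
    have hc: "?h \<in> Bij UNIV" using sub hG by auto
    have "f \<circ> ?h = id" using grp.r_inv[OF fc] mult[of f ?h] hc fc car one by metis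
    moreover have "?h \<circ> f = id" using grp.l_inv[OF fc] mult[of ?h f] hc fc car one by metis
    ultimately show ?thesis using hG by (metis comp_apply id_apply)
  qed
qed


locale cone_like_space =
  fixes G :: "('a::metric_space \<Rightarrow> 'a) set"
  assumes cone_like: "cone_like G"
begin

lemma locally_compact: "locally_compact_space (euclidean :: 'a topology)"
  using cone_like unfolding cone_like_def by (elim conjE) assumption

lemma subgroup: "subgroup G (BijGroup (UNIV :: 'a set))"
  using cone_like unfolding cone_like_def by (elim conjE) assumption

lemma nontrivial: "G \<noteq> {id}"
  using cone_like unfolding cone_like_def by (elim conjE) assumption

lemma homotheties: "\<forall>f\<in>G. \<exists>r. is_homothety f r"
  using cone_like unfolding cone_like_def by (elim conjE) assumption

lemma free: "\<forall>f\<in>G. \<forall>x. f x = x \<longrightarrow> f = id"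
  using cone_like unfolding cone_like_def by (elim conjE) assumption

lemma no_isometries: "\<forall>f\<in>G. (\<forall>x y. dist (f x) (f y) = dist x y) \<longrightarrow> f = id"
  using cone_like unfolding cone_like_def by (elim conjE) assumption

lemma compact_quotient: "\<exists>Q. quotient_map (euclidean :: 'a topology) Q (orbit G) \<and> compact_space Q"
  using cone_like unfolding cone_like_def by (elim conjE) assumption

lemma id_in: "id \<in> G"
  and comp_in: "f \<in> G \<Longrightarrow> h \<in> G \<Longrightarrow> f \<circ> h \<in> G"
  and inverse_in: "f \<in> G \<Longrightarrow> \<exists>h\<in>G. (\<forall>x. h (f x) = x) \<and> (\<forall>x. f (h x) = x)"
  using BijGroup_subgroup_closed[OF subgroup] by blast+

lemma homothety: "f \<in> G \<Longrightarrow> is_homothety f (hratio f)"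
  using homotheties unfolding hratio_def by (blast intro: someI_ex)

lemma hratio_pos: "f \<in> G \<Longrightarrow> hratio f > 0"
  using homothety by (simp add: is_homothety_def)

lemma dist_image: "f \<in> G \<Longrightarrow> dist (f x) (f y) = hratio f * dist x y"
  using homothety by (simp add: is_homothety_def)

lemma fixed_point_free: "f \<in> G \<Longrightarrow> f x = x \<Longrightarrow> f = id"
  using free by blast

lemma continuous_element: "f \<in> G \<Longrightarrow> continuous_on S f"
  using lipschitz_on_continuous_on homothety_lipschitz homothety by blast

lemma isometry_is_id: "f \<in> G \<Longrightarrow> (\<And>x y. dist (f x) (f y) = dist x y) \<Longrightarrow> f = id"
  using no_isometries by blast

(* G is commutative: the ratios of f h and h f agree, so f h (h f)^-1 is an isometry in G,
   hence the identity. *)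
lemma commute: assumes f: "f \<in> G" and h: "h \<in> G" shows "f (h x) = h (f x)"
proof -
  obtain w where w: "w \<in> G" "\<And>x. w (h (f x)) = x" "\<And>x. h (f (w x)) = x"
    using inverse_in[OF comp_in[OF h f]] by auto
  let ?e = "f \<circ> h \<circ> w"
  have "dist (?e x) (?e y) = dist x y" for x y
  proof -
    have "dist (?e x) (?e y) = hratio h * (hratio f * dist (w x) (w y))"
      using dist_image[OF f] dist_image[OF h] by simp
    also have "\<dots> = dist (h (f (w x))) (h (f (w y)))"
      using dist_image[OF f] dist_image[OF h] by simp
    finally show ?thesis using w(3) by simp
  qed
  then have "?e = id" using isometry_is_id comp_in[OF comp_in[OF f h] w(1)] by blast
  then have "?e (h (f x)) = h (f x)" by simp
  then show ?thesis using w(2) by simp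
qed

lemma commute_funpow:
  assumes f: "f \<in> G" and g: "g \<in> G" shows "f ((g ^^ m) x) = (g ^^ m) (f x)"
proof (induction m)
  case (Suc m)
  have "f (g ((g ^^ m) x)) = g (f ((g ^^ m) x))" using commute[OF f g] .
  then show ?case using Suc by simp
qed simp

(* G contains a strict contraction: a non-identity element is not an isometry, and if its
   ratio exceeds 1, its inverse contracts. *)
lemma exists_contraction: "\<exists>g\<in>G. g \<noteq> id \<and> hratio g < 1"
proof -
  obtain f where f: "f \<in> G" "f \<noteq> id" using nontrivial id_in by blast
  have "hratio f \<noteq> 1"
    using isometry_is_id[OF f(1)] dist_image[OF f(1)] f(2) by force
  show ?thesis
  proof (cases "hratio f < 1")
    case True
    then show ?thesis using f by blast
  next
    case False
    then have gt: "hratio f > 1" using \<open>hratio f \<noteq> 1\<close> by simp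
    obtain h where h: "h \<in> G" "\<And>x. h (f x) = x" "\<And>x. f (h x) = x" using inverse_in[OF f(1)] by blast
    obtain x where x: "f x \<noteq> x" using f(2) by (auto simp: fun_eq_iff)
    have "dist (f x) x = dist (f (h (f x))) (f (h x))" using h(3) by simp
    also have "\<dots> = hratio f * (hratio h * dist (f x) x)" using dist_image f(1) h(1) by simp
    finally have "hratio f * hratio h = 1" using x by (simp add: field_simps)
    then have "hratio h = 1 / hratio f" using gt by (simp add: field_simps)
    then have "hratio h < 1" using gt by simp
    moreover have "h \<noteq> id" using h(3) f(2) by (metis eq_id_iff)
    ultimately show ?thesis using h(1) by blast
  qed
qed

lemma orbit_self: "y \<in> orbit G y"
  unfolding orbit_def using id_in by (metis (mono_tags, lifting) id_apply mem_Collect_eq)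

lemma orbit_image: "f \<in> G \<Longrightarrow> orbit G (f y) = orbit G y"
proof -
  assume f: "f \<in> G"
  obtain h where h: "h \<in> G" "\<And>x. h (f x) = x" using inverse_in[OF f] by blast
  have "\<exists>k\<in>G. k' (f y) = k y" if "k' \<in> G" for k'
    using comp_in[OF that f] by (metis comp_apply)
  moreover have "\<exists>k\<in>G. k' y = k (f y)" if "k' \<in> G" for k'
    using comp_in[OF that h(1)] h(2) by (metis comp_apply)
  ultimately show ?thesis unfolding orbit_def by blast
qed

lemma orbit_in_image_iff: "orbit G y \<in> orbit G ` V \<longleftrightarrow> (\<exists>f\<in>G. f y \<in> V)"
proof
  assume "orbit G y \<in> orbit G ` V"
  then obtain v where v: "v \<in> V" "orbit G y = orbit G v" by blast
  then have "v \<in> orbit G y" using orbit_self by simp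
  then show "\<exists>f\<in>G. f y \<in> V" using v(1) unfolding orbit_def by blast
next
  assume "\<exists>f\<in>G. f y \<in> V"
  then obtain f where "f \<in> G" "f y \<in> V" by blast
  then have "orbit G y = orbit G (f y)" using orbit_image by simp
  then show "orbit G y \<in> orbit G ` V" using \<open>f y \<in> V\<close> by blast
qed

(* The quotient map to the orbit space is open: the saturation of an open set is a union of
   preimages under the continuous maps in G. *)
lemma quotient_image_open:
  assumes qm: "quotient_map euclidean Q (orbit G)" and V: "open V"
  shows "openin Q (orbit G ` V)"
proof -
  have sat: "{y \<in> topspace euclidean. orbit G y \<in> orbit G ` V} = (\<Union>f\<in>G. f -` V)"
    by (auto simp: orbit_in_image_iff)
  have "open (\<Union>f\<in>G. f -` V)"
    using V continuous_element by (intro open_UN ballI open_vimage) auto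
  moreover have "topspace Q = orbit G ` UNIV" using qm by (simp add: quotient_map_def)
  then have "orbit G ` V \<subseteq> topspace Q" by blast
  then have "openin euclidean {y \<in> topspace euclidean. orbit G y \<in> orbit G ` V}
      \<longleftrightarrow> openin Q (orbit G ` V)"
    using qm unfolding quotient_map_def by blast
  ultimately show ?thesis using sat by simp
qed

lemma compact_cball_exists:
  fixes x :: 'a
  shows "\<exists>e>0. compact (cball x e)"
proof -
  have "\<exists>U C. open U \<and> compact C \<and> x \<in> U \<and> U \<subseteq> C"
    using locally_compact unfolding locally_compact_space_def
    by (simp add: compactin_euclidean_iff)
  then obtain U C where UC: "open U" "compact C" "x \<in> U" "U \<subseteq> C" by blast
  obtain e where e: "e > 0" "ball x e \<subseteq> U" using openE[OF UC(1,3)] by blast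
  have "cball x (e / 2) \<subseteq> ball x e" using e(1) by (simp add: subset_iff)
  then have "cball x (e / 2) \<subseteq> C" using e(2) UC(4) by blast
  then have "compact (cball x (e / 2))"
    using compact_Int_closed[OF UC(2) closed_cball, of x "e / 2"] by (simp add: Int_absorb1)
  then show ?thesis using e(1) half_gt_zero by blast
qed

lemma compact_fundamental_set:
  obtains K r where "compact K" "r > 0" "\<And>y. \<exists>f\<in>G. cball (f y) r \<subseteq> K"
proof -
  obtain Q where qm: "quotient_map euclidean Q (orbit G)" and cs: "compact_space Q"
    using compact_quotient by blast
  obtain R :: "'a \<Rightarrow> real" where R: "\<And>x. R x > 0 \<and> compact (cball x (R x))"
    using compact_cball_exists by metis
  let ?V = "\<lambda>x. orbit G ` ball x (R x / 2)"
  have top: "topspace Q = orbit G ` UNIV" using qm by (simp add: quotient_map_def)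
  have cover: "topspace Q \<subseteq> \<Union> (range ?V)"
  proof
    fix c assume "c \<in> topspace Q"
    then obtain y where "c = orbit G y" using top by blast
    moreover have "orbit G y \<in> ?V y" using R[of y] by (intro imageI) simp
    ultimately show "c \<in> \<Union> (range ?V)" by blast
  qed
  have opens: "\<forall>U\<in>range ?V. openin Q U" using quotient_image_open[OF qm open_ball] by blast
  have "\<exists>\<F>. finite \<F> \<and> \<F> \<subseteq> range ?V \<and> topspace Q \<subseteq> \<Union>\<F>"
    using cs[unfolded compact_space_alt, rule_format, OF conjI[OF opens cover]] .
  then obtain \<F> where \<F>: "finite \<F>" "\<F> \<subseteq> range ?V" "topspace Q \<subseteq> \<Union>\<F>" by blast
  obtain D where D: "finite D" "\<F> = ?V ` D" using finite_subset_image[OF \<F>(1,2)] by blast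
  define K where "K = (\<Union>x\<in>D. cball x (R x))"
  define r where "r = Min (insert 1 ((\<lambda>x. R x / 2) ` D))"
  have "compact K" unfolding K_def using D(1) R by (intro compact_UN) simp_all
  moreover have "r > 0" unfolding r_def using D(1) R by (subst Min_gr_iff) simp_all
  moreover have "\<exists>f\<in>G. cball (f y) r \<subseteq> K" for y
  proof -
    have "orbit G y \<in> \<Union>\<F>" using \<F>(3) top by blast
    then obtain x where x: "x \<in> D" "orbit G y \<in> ?V x" using D(2) by blast
    then obtain f where f: "f \<in> G" "dist x (f y) < R x / 2"
      unfolding orbit_in_image_iff by auto
    have "r \<le> R x / 2" unfolding r_def using D(1) x(1) by (intro Min_le) simp_all
    have ball_in: "cball (f y) r \<subseteq> cball x (R x)"
    proof
      fix z assume "z \<in> cball (f y) r"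
      then show "z \<in> cball x (R x)"
        using \<open>r \<le> R x / 2\<close> f(2) dist_triangle[of x z "f y"] by simp
    qed
    moreover have "cball x (R x) \<subseteq> K" unfolding K_def using x(1) by (rule UN_upper)
    ultimately show ?thesis using f(1) by (meson subset_trans)
  qed
  ultimately show ?thesis by (rule that)
qed

lemma translate_tail_in_compact_convergent:
  assumes f: "f \<in> G" and t: "Cauchy t" and K: "compact K" and tail: "\<And>n. n \<ge> N \<Longrightarrow> f (t n) \<in> K"
  shows "convergent t"
proof -
  have "Cauchy (\<lambda>n. f (t n))" using lipschitz_Cauchy[OF homothety_lipschitz[OF homothety[OF f]] t] .
  then have "convergent (\<lambda>n. f (t n))" using K tail by (rule Cauchy_tail_in_compact_convergent)
  then obtain l where l: "(\<lambda>n. f (t n)) \<longlonglongrightarrow> l" by (auto simp: convergent_def)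
  obtain h where h: "h \<in> G" "\<And>x. h (f x) = x" using inverse_in[OF f] by blast
  have "(\<lambda>n. h (f (t n))) \<longlonglongrightarrow> h l" using l by (rule homothety_tendsto[OF homothety[OF h(1)]])
  then have "t \<longlonglongrightarrow> h l" using h(2) by simp
  then show ?thesis by (auto simp: convergent_def)
qed

end


(* A contraction g in G and a base point p: the sequence g^m p plays the role of a sequence
   converging to the singularity, and delta measures the distance to its limit. *)
locale cone_like_contraction = cone_like_space +
  fixes g :: "'a::metric_space \<Rightarrow> 'a" and p :: 'a
  assumes g_in: "g \<in> G" and g_not_id: "g \<noteq> id" and g_contracts: "hratio g < 1"
begin

definition orb :: "nat \<Rightarrow> 'a" where "orb m = (g ^^ m) p"

definition delta :: "'a \<Rightarrow> real" where "delta y = lim (\<lambda>m. dist y (orb m))"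

lemma dist_orb: "dist ((g ^^ m) x) ((g ^^ m) y) = hratio g ^ m * dist x y"
  using homothety_funpow[OF homothety[OF g_in], of m] by (simp add: is_homothety_def)

(* Geometric-series bound: every point of the orbit sequence lies within
   dist p (g p) / (1 - hratio g) of p. *)
lemma dist_base_orb: "dist p (orb k) \<le> dist p (g p) / (1 - hratio g)"
proof (induction k)
  case 0
  then show ?case using g_contracts by (simp add: orb_def)
next
  case (Suc k)
  have "dist p (orb (Suc k)) \<le> dist p (g p) + dist (g p) (g (orb k))"
    by (simp add: orb_def dist_triangle)
  also have "\<dots> = dist p (g p) + hratio g * dist p (orb k)" using dist_image[OF g_in] by simp
  also have "\<dots> \<le> dist p (g p) + hratio g * (dist p (g p) / (1 - hratio g))"
    using Suc hratio_pos[OF g_in] by (intro add_left_mono mult_left_mono) auto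
  also have "\<dots> = dist p (g p) / (1 - hratio g)" using g_contracts by (simp add: field_simps)
  finally show ?case .
qed

(* Since g^N is a homothety of ratio hratio g ^ N, the tail from N lies within
   hratio g ^ N * dist p (g p) / (1 - hratio g) of orb N. *)
lemma orb_Cauchy: "Cauchy orb"
  unfolding Cauchy_altdef2
proof (intro allI impI)
  fix e :: real assume e: "e > 0"
  let ?c = "dist p (g p) / (1 - hratio g)"
  have "(\<lambda>N. hratio g ^ N * ?c) \<longlonglongrightarrow> 0"
    using g_contracts hratio_pos[OF g_in] by (intro tendsto_mult_left_zero LIMSEQ_power_zero) simp
  then have "\<forall>\<^sub>F N in sequentially. hratio g ^ N * ?c < e" using e by (rule order_tendstoD(2))
  then obtain N where N: "hratio g ^ N * ?c < e" unfolding eventually_sequentially by blast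
  have "dist (orb n) (orb N) < e" if "n \<ge> N" for n
  proof -
    have "orb n = (g ^^ (N + (n - N))) p" using that by (simp add: orb_def)
    then have "orb n = (g ^^ N) (orb (n - N))" by (simp add: orb_def funpow_add)
    then have "dist (orb n) (orb N) = hratio g ^ N * dist p (orb (n - N))"
      by (simp add: orb_def dist_orb dist_commute)
    also have "\<dots> \<le> hratio g ^ N * ?c"
      using dist_base_orb hratio_pos[OF g_in] by (intro mult_left_mono) auto
    finally show ?thesis using N by simp
  qed
  then show "\<exists>N. \<forall>n\<ge>N. dist (orb n) (orb N) < e" by blast
qed

(* A limit of the orbit sequence would be a fixed point of g. *)
lemma orb_not_convergent: "\<not> convergent orb"
proof
  assume "convergent orb"
  then obtain y where y: "orb \<longlonglongrightarrow> y" by (auto simp: convergent_def)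
  have "(\<lambda>n. g (orb n)) \<longlonglongrightarrow> g y" using homothety_tendsto[OF homothety[OF g_in] y] .
  moreover have "(\<lambda>n. g (orb n)) \<longlonglongrightarrow> y" using LIMSEQ_Suc[OF y] by (simp add: orb_def)
  ultimately have "g y = y" using LIMSEQ_unique by blast
  then show False using fixed_point_free[OF g_in] g_not_id by blast
qed

lemma delta_tendsto: "(\<lambda>m. dist y (orb m)) \<longlonglongrightarrow> delta y"
proof -
  have "1-lipschitz_on UNIV (dist y)"
  proof (rule lipschitz_onI)
    fix a b
    show "dist (dist y a) (dist y b) \<le> 1 * dist a b"
      using abs_dist_diff_le[of a y b] by (simp add: dist_real_def dist_commute)
  qed simp
  then have "convergent (\<lambda>m. dist y (orb m))"
    using lipschitz_Cauchy orb_Cauchy Cauchy_convergent_iff by blast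
  then show ?thesis unfolding delta_def by (simp add: convergent_LIMSEQ_iff)
qed

(* Triangle inequality through the singularity: |dist x z - delta x| <= delta z. *)
lemma dist_delta_bound: "\<bar>dist x z - delta x\<bar> \<le> delta z"
proof -
  have "(\<lambda>m. \<bar>dist x z - dist x (orb m)\<bar>) \<longlonglongrightarrow> \<bar>dist x z - delta x\<bar>"
    by (intro tendsto_rabs tendsto_diff tendsto_const delta_tendsto)
  moreover have "\<bar>dist x z - dist x (orb m)\<bar> \<le> dist z (orb m)" for m
    using abs_dist_diff_le[of z x "orb m"] by (simp add: dist_commute)
  ultimately show ?thesis by (intro tendsto_le[OF _ delta_tendsto]) auto
qed

lemma delta_lipschitz: "1-lipschitz_on S delta"
proof (rule lipschitz_onI)
  fix a b
  have "(\<lambda>m. \<bar>dist a (orb m) - dist b (orb m)\<bar>) \<longlonglongrightarrow> \<bar>delta a - delta b\<bar>"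
    by (intro tendsto_rabs tendsto_diff delta_tendsto)
  moreover have "\<bar>dist a (orb m) - dist b (orb m)\<bar> \<le> dist a b" for m
    using abs_dist_diff_le[of a "orb m" b] by (simp add: dist_commute)
  ultimately have "\<bar>delta a - delta b\<bar> \<le> dist a b" by (intro tendsto_le[OF _ tendsto_const]) auto
  then show "dist (delta a) (delta b) \<le> 1 * dist a b" by (simp add: dist_real_def)
qed simp

lemma delta_pos: "delta y > 0"
proof -
  have "delta y \<ge> 0" using delta_tendsto by (rule LIMSEQ_le_const) simp
  moreover have "delta y \<noteq> 0"
  proof
    assume "delta y = 0"
    then have "(\<lambda>m. dist (orb m) y) \<longlonglongrightarrow> 0" using delta_tendsto[of y] by (simp add: dist_commute)
    then have "orb \<longlonglongrightarrow> y" by (rule tendsto_dist_iff[THEN iffD2])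
    then show False using orb_not_convergent by (auto simp: convergent_def)
  qed
  ultimately show ?thesis by simp
qed

(* Equivariance: f (g^m p) = g^m (f p) stays at distance hratio g ^ m * dist (f p) p from g^m p,
   so dist (f y) (g^m p) and hratio f * dist y (g^m p) have the same limit. *)
lemma delta_equivariant: assumes f: "f \<in> G" shows "delta (f y) = hratio f * delta y"
proof -
  have "(\<lambda>m. dist (f y) (orb m) - hratio f * dist y (orb m)) \<longlonglongrightarrow> delta (f y) - hratio f * delta y"
    by (intro tendsto_diff tendsto_mult tendsto_const delta_tendsto)
  moreover have "(\<lambda>m. dist (f y) (orb m) - hratio f * dist y (orb m)) \<longlonglongrightarrow> 0"
  proof (rule Lim_null_comparison)
    have "norm (dist (f y) (orb m) - hratio f * dist y (orb m)) \<le> hratio g ^ m * dist (f p) p" for m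
    proof -
      have "hratio f * dist y (orb m) = dist (f y) (f (orb m))" using dist_image[OF f] by simp
      moreover have "dist (f (orb m)) (orb m) = hratio g ^ m * dist (f p) p"
        using commute_funpow[OF f g_in] by (simp add: orb_def dist_orb)
      moreover have "\<bar>dist (f y) (orb m) - dist (f y) (f (orb m))\<bar> \<le> dist (f (orb m)) (orb m)"
        using abs_dist_diff_le[of "orb m" "f y" "f (orb m)"] by (simp add: dist_commute)
      ultimately show ?thesis by simp
    qed
    then show "\<forall>\<^sub>F m in sequentially. norm (dist (f y) (orb m) - hratio f * dist y (orb m))
                 \<le> hratio g ^ m * dist (f p) p"
      by simp
    show "(\<lambda>m. hratio g ^ m * dist (f p) p) \<longlonglongrightarrow> 0"
      using g_contracts hratio_pos[OF g_in] by (intro tendsto_mult_left_zero LIMSEQ_power_zero) simp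
  qed
  ultimately show ?thesis using LIMSEQ_unique by fastforce
qed

(* Otherwise delta
   stays above L/2 > 0 on a tail of t.  Some f in G maps t N to the centre of an r-ball inside
   the compact set K, where delta <= M; equivariance bounds hratio f by 2M/L, so f maps the
   whole (sufficiently late) tail of t into that ball, and t would converge. *)
lemma delta_vanishes_at_singularity:
  assumes t: "Cauchy t" "\<not> convergent t"
  shows "(\<lambda>n. delta (t n)) \<longlonglongrightarrow> 0"
proof -
  obtain K r where K: "compact K" "r > 0" "\<And>y. \<exists>f\<in>G. cball (f y) r \<subseteq> K"
    using compact_fundamental_set by blast
  obtain B where B: "\<forall>x\<in>K. delta x \<le> B"
    using continuous_positive_bounds[OF lipschitz_on_continuous_on[OF delta_lipschitz] K(1)]
      delta_pos by blast
  define M where "M = max 1 B"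
  have M: "\<And>x. x \<in> K \<Longrightarrow> delta x \<le> M" "M > 0" using B by (auto simp: M_def)
  obtain L where L: "(\<lambda>n. delta (t n)) \<longlonglongrightarrow> L"
    using lipschitz_Cauchy[OF delta_lipschitz t(1)] Cauchy_convergent_iff convergent_def by blast
  have "L \<ge> 0" using L by (rule LIMSEQ_le_const) (simp add: less_imp_le delta_pos)
  moreover have "\<not> L > 0"
  proof
    assume L_pos: "L > 0"
    define e where "e = r * L / (2 * M)"
    have e_pos: "e > 0" using K(2) L_pos M(2) by (simp add: e_def)
    obtain N1 where N1: "\<forall>m\<ge>N1. \<forall>n\<ge>N1. dist (t m) (t n) < e"
      using t(1) e_pos unfolding Cauchy_def by blast
    obtain N2 where N2: "\<forall>n\<ge>N2. delta (t n) > L / 2"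
      using order_tendstoD(1)[OF L, of "L / 2"] L_pos by (auto simp: eventually_sequentially)
    define N where "N = max N1 N2"
    obtain f where f: "f \<in> G" "cball (f (t N)) r \<subseteq> K" using K(3) by blast
    have "f (t N) \<in> cball (f (t N)) r" using K(2) by simp
    then have "hratio f * delta (t N) \<le> M"
      using M(1) f(2) delta_equivariant[OF f(1)] by (metis subsetD)
    moreover have "delta (t N) > L / 2" using N2 by (simp add: N_def)
    ultimately have ratio_bound: "hratio f * (L / 2) < M"
      using hratio_pos[OF f(1)] by (meson mult_strict_left_mono order_less_le_trans)
    have "f (t n) \<in> K" if "n \<ge> N" for n
    proof -
      have "dist (f (t N)) (f (t n)) = hratio f * dist (t N) (t n)" using dist_image[OF f(1)] .
      also have "\<dots> \<le> hratio f * e"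
        using N1 that hratio_pos[OF f(1)] by (intro mult_left_mono) (auto simp: N_def less_imp_le)
      also have "\<dots> = r * (hratio f * (L / 2)) / M" by (simp add: e_def field_simps)
      also have "\<dots> \<le> r" using ratio_bound M(2) K(2) by (simp add: divide_le_eq less_imp_le)
      finally show ?thesis using f(2) by (auto simp: subset_iff)
    qed
    then show False using translate_tail_in_compact_convergent[OF f(1) t(1) K(1)] t(2) by blast
  qed
  ultimately show ?thesis using L by simp
qed

lemma sing_dist_eq_delta: "sing_dist x = delta x"
  unfolding sing_dist_def
proof (rule the_equality)
  show "\<exists>s. Cauchy s \<and> \<not> convergent s \<and> (\<lambda>n. dist x (s n)) \<longlonglongrightarrow> delta x"
    using orb_Cauchy orb_not_convergent delta_tendsto by blast
next
  fix l assume "\<exists>s. Cauchy s \<and> \<not> convergent s \<and> (\<lambda>n. dist x (s n)) \<longlonglongrightarrow> l"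
  then obtain s where s: "Cauchy s" "\<not> convergent s" "(\<lambda>n. dist x (s n)) \<longlonglongrightarrow> l" by blast
  have "(\<lambda>n. dist x (s n) - delta x) \<longlonglongrightarrow> 0"
    by (rule Lim_null_comparison[OF _ delta_vanishes_at_singularity[OF s(1,2)]])
      (simp add: dist_delta_bound)
  then have "(\<lambda>n. dist x (s n)) \<longlonglongrightarrow> delta x" by (simp add: LIM_zero_iff)
  then show "l = delta x" using s(3) LIMSEQ_unique by blast
qed

end


context cone_like_space
begin

lemma sing_dist_properties:
  fixes x :: 'a and S :: "'a set"
  shows "sing_dist x > 0" and "continuous_on S sing_dist"
    and "f \<in> G \<Longrightarrow> sing_dist (f x) = hratio f * sing_dist x"
proof -
  obtain g where "g \<in> G" "g \<noteq> id" "hratio g < 1" using exists_contraction by blast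
  then interpret cone_like_contraction G g undefined by unfold_locales
  have "sing_dist = delta" using sing_dist_eq_delta by blast
  then show "sing_dist x > 0" and "continuous_on S sing_dist"
    and "f \<in> G \<Longrightarrow> sing_dist (f x) = hratio f * sing_dist x"
    using delta_pos lipschitz_on_continuous_on[OF delta_lipschitz] delta_equivariant by simp_all
qed

end


theorem mainTheorem5:
  fixes G :: "('a::metric_space \<Rightarrow> 'a) set" and \<psi> :: "'a \<Rightarrow> real"
  assumes "cone_like G"
    and "\<And>x. \<psi> x > 0"
    and "\<And>f x. f \<in> G \<Longrightarrow> \<psi> (f x) = hratio f * \<psi> x"
    and "locally_bounded \<psi>"
    and "locally_bounded (\<lambda>x. inverse (\<psi> x))"
  shows "quasi_linear \<psi>"
proof -
  interpret cone_like_space G by (rule cone_like_space.intro) (rule assms(1))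
  obtain K r where K: "compact K" "r > 0" "\<And>y. \<exists>f\<in>G. cball (f y) r \<subseteq> K"
    using compact_fundamental_set by blast
  have meets: "\<exists>f\<in>G. f y \<in> K" for y
  proof -
    obtain f where "f \<in> G" "cball (f y) r \<subseteq> K" using K(3) by blast
    moreover have "f y \<in> cball (f y) r" using K(2) by simp
    ultimately show ?thesis by blast
  qed
  obtain a A where a: "a > 0" "\<And>x. x \<in> K \<Longrightarrow> a \<le> sing_dist x \<and> sing_dist x \<le> A"
    using continuous_positive_bounds[OF sing_dist_properties(2) K(1) sing_dist_properties(1)] by blast
  obtain b B where b: "b > 0" "\<And>x. x \<in> K \<Longrightarrow> b \<le> \<psi> x \<and> \<psi> x \<le> B"
    using locally_bounded_positive_bounds[OF assms(2,4,5) K(1)] by blast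
  have "\<exists>k1 k2. 0 < k1 \<and> k1 \<le> k2 \<and> (\<forall>x. k1 * sing_dist x \<le> \<psi> x \<and> \<psi> x \<le> k2 * sing_dist x)"
    by (rule equivariant_comparison[where \<rho> = hratio and K = K and a = a and A = A and b = b and B = B])
      (use meets hratio_pos sing_dist_properties(3) assms(3) a b in auto)
  then show ?thesis using assms(2) unfolding quasi_linear_def by blast
qed

end
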